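(* Let $(A,C,k)$ be an approval-based multiwinner instance with $n$ voters, and let $W \subseteq C$ be an affordable committee. Then $\mathrm{cov}(W) \ge \frac{|W|}{k}\, n$.
   Context: An instance $(A,C,k)$ consists of a finite nonempty candidate set $C$, voters $N=\{1,\dots,n\}$ with $n\ge 1$, an approval set $A_i\subseteq C$ for each voter $i$, and a committee size $k$ with $1\le k\le |C|$. For $c\in C$ let $N_c=\{i\in N: c\in A_i\}$. A committee is a set $W\subseteq C$ with $|W|\le k$. The coverage is $\mathrm{cov}(W)=|\{i\in N: A_i\cap W\neq\emptyset\}|$. A payment system assigns to each voter $i$ a function $p_i:C\to\mathbb{R}_{\ge 0}$. A committee $W$ is affordable if there is a payment system with: (C1) $p_i(c)=0$ whenever $c\notin A_i$; (C2) $\sum_{c\in C}p_i(c)\le k/n$ for every $i\in N$; (C3) $\sum_{i\in N}p_i(c)=1$ for every $c\in W$; (C4) $\sum_{i\in N}p_i(c)=0$ for every $c\notin W$. *)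

theory Defs
  imports Main "HOL.Real"
begin

definition voters :: "nat \<Rightarrow> nat set" where
  "voters n = {1..n}"

definition is_instance :: "'c set \<Rightarrow> nat \<Rightarrow> (nat \<Rightarrow> 'c set) \<Rightarrow> nat \<Rightarrow> bool" where
  "is_instance C n A k \<longleftrightarrow> finite C \<and> C \<noteq> {} \<and> n \<ge> 1 \<and>
     (\<forall>i\<in>voters n. A i \<subseteq> C) \<and> 1 \<le> k \<and> k \<le> card C"

definition is_committee :: "'c set \<Rightarrow> nat \<Rightarrow> 'c set \<Rightarrow> bool" where
  "is_committee C k W \<longleftrightarrow> W \<subseteq> C \<and> card W \<le> k"

definition cov :: "nat \<Rightarrow> (nat \<Rightarrow> 'c set) \<Rightarrow> 'c set \<Rightarrow> nat" where
  "cov n A W = card {i \<in> voters n. A i \<inter> W \<noteq> {}}"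

definition is_payment_for ::
  "'c set \<Rightarrow> nat \<Rightarrow> (nat \<Rightarrow> 'c set) \<Rightarrow> nat \<Rightarrow> 'c set \<Rightarrow> (nat \<Rightarrow> 'c \<Rightarrow> real) \<Rightarrow> bool" where
  "is_payment_for C n A k W p \<longleftrightarrow>
     (\<forall>i\<in>voters n. \<forall>c\<in>C. p i c \<ge> 0) \<and>
     (\<forall>i\<in>voters n. \<forall>c\<in>C. c \<notin> A i \<longrightarrow> p i c = 0) \<and>
     (\<forall>i\<in>voters n. (\<Sum>c\<in>C. p i c) \<le> real k / real n) \<and>
     (\<forall>c\<in>W. (\<Sum>i\<in>voters n. p i c) = 1) \<and>
     (\<forall>c\<in>C - W. (\<Sum>i\<in>voters n. p i c) = 0)"

definition affordable :: "'c set \<Rightarrow> nat \<Rightarrow> (nat \<Rightarrow> 'c set) \<Rightarrow> nat \<Rightarrow> 'c set \<Rightarrow> bool" where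
  "affordable C n A k W \<longleftrightarrow> is_committee C k W \<and> (\<exists>p. is_payment_for C n A k W p)"

end

theory Submission
  imports Defs
begin

text \<open>Double-count the money spent on \<open>W\<close>: every member of \<open>W\<close> receives exactly 1,
  so the total is \<open>|W|\<close>; only voters approving some member of \<open>W\<close> contribute to it,
  and each of them contributes at most their budget \<open>k/n\<close>.\<close>

lemma card_le_budget_times_card_covered:
  fixes p :: "'v \<Rightarrow> 'c \<Rightarrow> real"
  assumes "finite V"
    and no_pay_unapproved: "\<And>i c. i \<in> V \<Longrightarrow> c \<in> W \<Longrightarrow> c \<notin> A i \<Longrightarrow> p i c = 0"
    and budget: "\<And>i. i \<in> V \<Longrightarrow> (\<Sum>c\<in>W. p i c) \<le> b"
    and fully_paid: "\<And>c. c \<in> W \<Longrightarrow> (\<Sum>i\<in>V. p i c) = 1"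
  shows "real (card W) \<le> b * real (card {i \<in> V. A i \<inter> W \<noteq> {}})"
proof -
  let ?S = "{i \<in> V. A i \<inter> W \<noteq> {}}"
  have "real (card W) = (\<Sum>c\<in>W. \<Sum>i\<in>V. p i c)"
    using fully_paid by simp
  also have "\<dots> = (\<Sum>i\<in>V. \<Sum>c\<in>W. p i c)"
    by (rule sum.swap)
  also have "\<dots> = (\<Sum>i\<in>?S. \<Sum>c\<in>W. p i c)"
    using \<open>finite V\<close> no_pay_unapproved
    by (intro sum.mono_neutral_right) (auto intro!: sum.neutral)
  also have "\<dots> \<le> (\<Sum>i\<in>?S. b)"
    using budget by (intro sum_mono) auto
  finally show ?thesis
    by (simp add: mult.commute)
qed

lemma payment_committee_sum_le_budget:
  assumes "is_payment_for C n A k W p" "finite C" "W \<subseteq> C" "i \<in> voters n"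
  shows "(\<Sum>c\<in>W. p i c) \<le> real k / real n"
proof -
  have "(\<Sum>c\<in>W. p i c) \<le> (\<Sum>c\<in>C. p i c)"
    using assms by (intro sum_mono2) (auto simp: is_payment_for_def)
  also have "\<dots> \<le> real k / real n"
    using assms by (simp add: is_payment_for_def)
  finally show ?thesis .
qed

lemma affordable_card_le_cov:
  assumes "affordable C n A k W" "finite C"
  shows "real (card W) \<le> real k / real n * real (cov n A W)"
proof -
  obtain p where p: "is_payment_for C n A k W p" and "W \<subseteq> C"
    using assms(1) by (auto simp: affordable_def is_committee_def)
  show ?thesis
    unfolding cov_def
  proof (rule card_le_budget_times_card_covered[where p = p])
    show "finite (voters n)"
      by (simp add: voters_def)
    show "\<And>i. i \<in> voters n \<Longrightarrow> (\<Sum>c\<in>W. p i c) \<le> real k / real n"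
      using payment_committee_sum_le_budget[OF p \<open>finite C\<close> \<open>W \<subseteq> C\<close>] .
  qed (use p \<open>W \<subseteq> C\<close> in \<open>auto simp: is_payment_for_def\<close>)
qed

theorem mainTheorem1:
  fixes C :: "'c set" and n k :: nat and A :: "nat \<Rightarrow> 'c set" and W :: "'c set"
  assumes "is_instance C n A k"
    and "affordable C n A k W"
  shows "real (cov n A W) \<ge> real (card W) / real k * real n"
proof -
  have "finite C" "n \<ge> 1" "k \<ge> 1"
    using assms(1) by (auto simp: is_instance_def)
  moreover have "real (card W) \<le> real k / real n * real (cov n A W)"
    using affordable_card_le_cov[OF assms(2) \<open>finite C\<close>] .
  ultimately show ?thesis
    by (simp add: field_simps)
qed

end
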